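(* Assume the setup in the context and let $\preceq$ be the total order on $X$ given by: $u^*_{t,s}\prec u_{j,i}$ for all indices, $u_{t,s}\prec u_{j,i}$ iff $(t,s)<(j,i)$ lexicographically, and $u^*_{t,s}\prec u^*_{j,i}$ iff $(t,s)<(j,i)$ lexicographically, extended degree-lexicographically to monomials. Then $R$ is not a Gröbner basis of $I$ with respect to $\preceq$ (i.e. the tips of elements of $R$ do not generate the monoid ideal of tips of nonzero elements of $I$). In particular $R$ is not a universal Gröbner basis of $I$.
   Context: Let $k$ be a field and $n\ge 2$ an integer; write $[n]=\{1,\dots,n\}$ and $r(i)=n+1-i$. Let $X=\{u_{j,i},u^*_{j,i}:(j,i)\in[n]^2\}$ be a set of $2n^2$ distinct symbols and let $*$ be the involution of $X$ exchanging $u_{j,i}$ and $u^*_{j,i}$. Let $k\langle X\rangle$ be the free unital $k$-algebra on $X$. For an $n\times n$ matrix $v=(v_{j,i})$ with entries in $X$ define $v^t_{j,i}=v_{i,j}$, $v^\star_{j,i}=(v_{r(j),r(i)})^*$, $v^\dagger_{j,i}=(v_{r(i),r(j)})^*$. Let $u=(u_{j,i})$ and $M=\{u,u^t,u^\star,u^\dagger\}$. Let $I$ be the two-sided ideal generated by $R=\{\sum_{s=1}^n v_{j,r(s)}v^\dagger_{s,r(i)}-\delta_{j,i}1: v\in M,(j,i)\in[n]^2\}$ (these are exactly the relations $uu^{*T}=1$-type unitarity relations: $\sum_s u_{j,s}u^*_{i,s}=\delta_{j,i}$, $\sum_s u_{s,j}u^*_{s,i}=\delta_{j,i}$, $\sum_s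 u^*_{s,j}u_{s,i}=\delta_{j,i}$, $\sum_s u^*_{j,s}u_{i,s}=\delta_{j,i}$). A Gröbner basis of $I$ with respect to a monomial order is a subset $G\subseteq I$ such that the leading monomials of elements of $G$ generate, as a two-sided monoid ideal of the free monoid on $X$, the set of leading monomials of all nonzero elements of $I$. *)

theory Defs
  imports Main
begin

text \<open>The generators X: U j i stands for u_{j,i}, Us j i for u^*_{j,i} (indices in [n]).\<close>
datatype gen = U nat nat | Us nat nat

fun gstar :: "gen \<Rightarrow> gen" where
  "gstar (U j i) = Us j i"
| "gstar (Us j i) = U j i"

text \<open>Elements of the free unital algebra k<X>: finitely supported functions
  from words (the free monoid on X) to k.  Multiplication is concatenation-convolution.\<close>
type_synonym 'k fpoly = "gen list \<Rightarrow> 'k"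

definition fin_supp :: "'k::zero fpoly \<Rightarrow> bool" where
  "fin_supp p \<longleftrightarrow> finite {w. p w \<noteq> 0}"

definition mono :: "gen list \<Rightarrow> 'k::{zero,one} fpoly" where
  "mono v = (\<lambda>w. if w = v then 1 else 0)"

definition pzero :: "'k::zero fpoly" where
  "pzero = (\<lambda>w. 0)"

definition padd :: "'k::plus fpoly \<Rightarrow> 'k fpoly \<Rightarrow> 'k fpoly" where
  "padd p q = (\<lambda>w. p w + q w)"

definition pmult :: "'k::comm_semiring_0 fpoly \<Rightarrow> 'k fpoly \<Rightarrow> 'k fpoly" where
  "pmult p q = (\<lambda>w. \<Sum>i\<le>length w. p (take i w) * q (drop i w))"

inductive_set ideal_gen :: "'k::field fpoly set \<Rightarrow> 'k fpoly set" for S where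
  gen: "r \<in> S \<Longrightarrow> r \<in> ideal_gen S"
| zero: "pzero \<in> ideal_gen S"
| add: "p \<in> ideal_gen S \<Longrightarrow> q \<in> ideal_gen S \<Longrightarrow> padd p q \<in> ideal_gen S"
| lmult: "p \<in> ideal_gen S \<Longrightarrow> fin_supp a \<Longrightarrow> pmult a p \<in> ideal_gen S"
| rmult: "p \<in> ideal_gen S \<Longrightarrow> fin_supp a \<Longrightarrow> pmult p a \<in> ideal_gen S"

definition rr :: "nat \<Rightarrow> nat \<Rightarrow> nat" where
  "rr n i = n + 1 - i"

definition mat_u :: "nat \<Rightarrow> nat \<Rightarrow> gen" where
  "mat_u j i = U j i"

definition mat_t :: "(nat \<Rightarrow> nat \<Rightarrow> gen) \<Rightarrow> nat \<Rightarrow> nat \<Rightarrow> gen" where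
  "mat_t v j i = v i j"

definition mat_star :: "nat \<Rightarrow> (nat \<Rightarrow> nat \<Rightarrow> gen) \<Rightarrow> nat \<Rightarrow> nat \<Rightarrow> gen" where
  "mat_star n v j i = gstar (v (rr n j) (rr n i))"

definition mat_dag :: "nat \<Rightarrow> (nat \<Rightarrow> nat \<Rightarrow> gen) \<Rightarrow> nat \<Rightarrow> nat \<Rightarrow> gen" where
  "mat_dag n v j i = gstar (v (rr n i) (rr n j))"

definition Mset :: "nat \<Rightarrow> (nat \<Rightarrow> nat \<Rightarrow> gen) set" where
  "Mset n = {mat_u, mat_t mat_u, mat_star n mat_u, mat_dag n mat_u}"

definition Rel :: "nat \<Rightarrow> 'k::field fpoly set" where
  "Rel n = {(\<lambda>w. (\<Sum>s\<in>{1..n}. mono [v j (rr n s), mat_dag n v s (rr n i)] w)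
               - (if j = i then mono [] w else 0))
           | v j i. v \<in> Mset n \<and> j \<in> {1..n} \<and> i \<in> {1..n}}"

fun gen_less :: "gen \<Rightarrow> gen \<Rightarrow> bool" where
  "gen_less (Us t s) (U j i) = True"
| "gen_less (U t s) (Us j i) = False"
| "gen_less (U t s) (U j i) = (t < j \<or> (t = j \<and> s < i))"
| "gen_less (Us t s) (Us j i) = (t < j \<or> (t = j \<and> s < i))"

definition word_less :: "gen list \<Rightarrow> gen list \<Rightarrow> bool" where
  "word_less v w \<longleftrightarrow> length v < length w \<or>
     (length v = length w \<and> (\<exists>p a b x y. v = p @ a # x \<and> w = p @ b # y \<and> gen_less a b))"

definition tip :: "'k::zero fpoly \<Rightarrow> gen list" where
  "tip p = (THE w. p w \<noteq> 0 \<and> (\<forall>v. p v \<noteq> 0 \<and> v \<noteq> w \<longrightarrow> word_less v w))"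

definition is_groebner_basis :: "'k::zero fpoly set \<Rightarrow> 'k fpoly set \<Rightarrow> bool" where
  "is_groebner_basis G I \<longleftrightarrow> G \<subseteq> I \<and>
     (\<forall>f\<in>I. f \<noteq> pzero \<longrightarrow>
        (\<exists>g\<in>G. g \<noteq> pzero \<and> (\<exists>a b. tip f = a @ tip g @ b)))"

end

theory Submission imports Defs begin

text \<open>Multiply the relation sum_s u*_{1,s} u_{1,s} = 1 on the left by u_{1,n}, the relation
  sum_s u_{1,s} u*_{1,s} = 1 on the right by u_{1,n}, and subtract. The largest words
  u_{1,n} u*_{1,n} u_{1,n} of the two products cancel, so the tip of the difference is
  u_{1,n} u*_{1,n-1} u_{1,n-1}. On the other hand every relation in R is a sum over a row or column
  of u or u*; its tip is the summand with the largest first letter, and both letters of that tip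
  carry the index n. For n \<ge> 2 neither factor of length two of the tip above has this property.\<close>

lemma gen_less_irrefl: "\<not> gen_less a a"
  by (cases a) auto

lemma gen_less_asym: "gen_less a b \<Longrightarrow> \<not> gen_less b a"
  by (cases a; cases b) auto

lemma common_prefix_at_difference:
  assumes "p @ a # x = p' @ a' # x'" "p @ b # y = p' @ b' # y'" "a \<noteq> b" "a' \<noteq> b'"
  shows "p = p'"
proof -
  have "length p = length p'"
  proof (rule ccontr)
    assume "length p \<noteq> length p'"
    then consider "length p < length p'" | "length p' < length p" by linarith
    then show False
    proof cases
      case 1
      then have "a = p' ! length p" "b = p' ! length p"
        using arg_cong[OF assms(1), of "\<lambda>v. v ! length p"] arg_cong[OF assms(2), of "\<lambda>v. v ! length p"]
        by (simp_all add: nth_append)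
      with assms(3) show False by simp
    next
      case 2
      then have "a' = p ! length p'" "b' = p ! length p'"
        using arg_cong[OF assms(1), of "\<lambda>v. v ! length p'"] arg_cong[OF assms(2), of "\<lambda>v. v ! length p'"]
        by (simp_all add: nth_append)
      with assms(4) show False by simp
    qed
  qed
  then show ?thesis
    using arg_cong[OF assms(1), of "take (length p)"] by simp
qed

lemma word_less_irrefl: "\<not> word_less v v"
  unfolding word_less_def using gen_less_irrefl by auto

lemma word_less_asym:
  assumes "word_less v w"
  shows "\<not> word_less w v"
proof
  assume "word_less w v"
  moreover have "length v = length w"
    using assms \<open>word_less w v\<close> unfolding word_less_def by auto
  moreover obtain p a b x y where vw: "v = p @ a # x" "w = p @ b # y" "gen_less a b"
    using assms calculation(2) unfolding word_less_def by auto
  ultimately obtain p' a' b' x' y' where wv: "w = p' @ a' # x'" "v = p' @ b' # y'" "gen_less a' b'"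
    unfolding word_less_def by auto
  have "p = p'"
    using common_prefix_at_difference[of p a x p' b' y' b y a' x'] vw wv gen_less_irrefl by metis
  then show False
    using vw wv gen_less_asym by auto
qed

lemma word_less_shorter: "length v < length w \<Longrightarrow> word_less v w"
  unfolding word_less_def by simp

lemma word_less_Cons: "gen_less a b \<Longrightarrow> length x = length y \<Longrightarrow> word_less (a # x) (b # y)"
  unfolding word_less_def by (auto intro!: exI[of _ "[]"])

lemma word_less_Cons_same:
  assumes "word_less x y"
  shows "word_less (c # x) (c # y)"
proof (cases "length x = length y")
  case True
  with assms obtain p a b x' y' where "x = p @ a # x'" "y = p @ b # y'" "gen_less a b"
    unfolding word_less_def by auto
  with True show ?thesis
    unfolding word_less_def by (auto intro!: exI[of _ "c # p"])
qed (use assms in \<open>auto simp: word_less_def\<close>)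

lemma tip_eqI:
  assumes "p m \<noteq> 0" "\<And>v. p v \<noteq> 0 \<Longrightarrow> v \<noteq> m \<Longrightarrow> word_less v m"
  shows "tip p = m"
  unfolding tip_def
proof (rule the_equality)
  fix w assume w: "p w \<noteq> 0 \<and> (\<forall>v. p v \<noteq> 0 \<and> v \<noteq> w \<longrightarrow> word_less v w)"
  show "w = m"
    using w assms word_less_asym by blast
qed (use assms in auto)

definition smono :: "'k::zero \<Rightarrow> gen list \<Rightarrow> 'k fpoly" where
  "smono c v = (\<lambda>w. if w = v then c else 0)"

lemma mono_eq_smono: "mono v = smono 1 v"
  by (simp add: mono_def smono_def)

lemma fin_supp_smono: "fin_supp (smono c v)"
  unfolding fin_supp_def smono_def by (rule finite_subset[of _ "{v}"]) auto

lemma pmult_smono_letter_left: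
  "pmult (smono c [x]) p w = (if w \<noteq> [] \<and> hd w = x then c * p (tl w) else (0::'k::comm_semiring_0))"
proof -
  have "pmult (smono c [x]) p w = (\<Sum>i\<le>length w. if i = 1 then (if w \<noteq> [] \<and> hd w = x then c * p (tl w) else 0) else 0)"
    unfolding pmult_def
  proof (rule sum.cong)
    fix i assume "i \<in> {..length w}"
    then show "smono c [x] (take i w) * p (drop i w) = (if i = 1 then (if w \<noteq> [] \<and> hd w = x then c * p (tl w) else 0) else 0)"
      by (cases w; cases i) (auto simp: smono_def drop_Suc)
  qed simp
  then show ?thesis
    by (cases w) (auto simp: Suc_le_eq)
qed

lemma pmult_smono_letter_right:
  "pmult p (smono c [x]) w = (if w \<noteq> [] \<and> last w = x then p (butlast w) * c else (0::'k::comm_semiring_0))"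
proof -
  have "drop i w = [x] \<longleftrightarrow> w \<noteq> [] \<and> i = length w - 1 \<and> last w = x" if "i \<le> length w" for i
  proof
    assume drop: "drop i w = [x]"
    moreover have "w \<noteq> []" "i = length w - 1"
      using arg_cong[OF drop, of length] by auto
    ultimately show "w \<noteq> [] \<and> i = length w - 1 \<and> last w = x"
      using last_drop[of i w] by simp
  next
    assume "w \<noteq> [] \<and> i = length w - 1 \<and> last w = x"
    then show "drop i w = [x]"
      by (metis append_butlast_last_id append_eq_conv_conj length_butlast)
  qed
  then have "pmult p (smono c [x]) w = (\<Sum>i\<le>length w. if i = length w - 1 then (if w \<noteq> [] \<and> last w = x then p (butlast w) * c else 0) else 0)"
    unfolding pmult_def by (intro sum.cong) (auto simp: smono_def butlast_conv_take)
  then show ?thesis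
    by auto
qed

lemma sum_mono_apply:
  "finite S \<Longrightarrow> (\<Sum>s\<in>S. mono (W s) w) = (of_nat (card {s\<in>S. W s = w}) :: 'k::semiring_1)"
  by (simp add: mono_def sum.If_cases Int_def conj_commute eq_commute)

lemma sum_mono_apply_inj_on:
  assumes "finite S" "inj_on W S"
  shows "(\<Sum>s\<in>S. mono (W s) w) = (if w \<in> W ` S then 1 else (0::'k::semiring_1))"
proof (cases "w \<in> W ` S")
  case True
  then obtain s0 where "s0 \<in> S" "w = W s0"
    by blast
  then have one: "{s\<in>S. W s = w} = {s0}"
    using assms(2) by (auto dest: inj_onD)
  show ?thesis
    unfolding sum_mono_apply[OF assms(1)] one using True by simp
next
  case False
  then have none: "{s\<in>S. W s = w} = {}"
    by blast
  show ?thesis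
    unfolding sum_mono_apply[OF assms(1)] none using False by simp
qed

lemma tip_relation_poly:
  fixes b :: bool
  assumes "finite S" "k \<in> S" "W k \<noteq> []" "\<And>s. s \<in> S \<Longrightarrow> s \<noteq> k \<Longrightarrow> word_less (W s) (W k)"
  shows "tip (\<lambda>w. (\<Sum>s\<in>S. mono (W s) w) - (if b then mono [] w else (0::'k::field))) = W k"
proof (rule tip_eqI)
  have "{s \<in> S. W s = W k} = {k}"
    using assms(2,4) word_less_irrefl by force
  then show "(\<Sum>s\<in>S. mono (W s) (W k)) - (if b then mono [] (W k) else 0) \<noteq> (0::'k)"
    using assms(1,3) by (simp add: sum_mono_apply mono_def[of "[]"])
next
  fix v assume v: "(\<Sum>s\<in>S. mono (W s) v) - (if b then mono [] v else 0) \<noteq> (0::'k)" "v \<noteq> W k"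
  show "word_less v (W k)"
  proof (cases "v = []")
    case True
    then show ?thesis using assms(3) by (simp add: word_less_shorter)
  next
    case False
    then have "of_nat (card {s \<in> S. W s = v}) \<noteq> (0::'k)"
      using v(1) assms(1) by (simp add: sum_mono_apply mono_def[of "[]"] split: if_split_asm)
    then have "{s \<in> S. W s = v} \<noteq> {}"
      by (metis card.empty of_nat_0)
    then obtain s where "s \<in> S" "W s = v"
      by blast
    then show ?thesis
      using v(2) assms(4) by blast
  qed
qed

fun gen_indices :: "gen \<Rightarrow> nat set" where
  "gen_indices (U j i) = {j, i}"
| "gen_indices (Us j i) = {j, i}"

lemma tip_Rel:
  assumes "g \<in> (Rel n :: 'k::field fpoly set)"
  shows "\<exists>x y. tip g = [x, y] \<and> n \<in> gen_indices x \<and> n \<in> gen_indices y"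
proof -
  obtain v j i where g: "g = (\<lambda>w. (\<Sum>s\<in>{1..n}. mono [v j (rr n s), mat_dag n v s (rr n i)] w)
               - (if j = i then mono [] w else 0))" and v: "v \<in> Mset n" and ji: "j \<in> {1..n}" "i \<in> {1..n}"
    using assms unfolding Rel_def by blast
  let ?W = "\<lambda>s. [v j (rr n s), mat_dag n v s (rr n i)]"
  \<comment> \<open>The first letters of the summands run through a row or column of u or u*.\<close>
  have "\<exists>k\<in>{1..n}. (\<forall>s\<in>{1..n}. s \<noteq> k \<longrightarrow> word_less (?W s) (?W k))
          \<and> (\<forall>x\<in>set (?W k). n \<in> gen_indices x)"
    using v unfolding Mset_def
  proof (elim insertE emptyE)
    assume "v = mat_u"
    then show ?thesis
      using ji by (auto simp: mat_dag_def mat_u_def rr_def intro!: word_less_Cons bexI[of _ 1])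
  next
    assume "v = mat_t mat_u"
    then show ?thesis
      using ji by (auto simp: mat_dag_def mat_t_def mat_u_def rr_def intro!: word_less_Cons bexI[of _ 1])
  next
    assume "v = mat_star n mat_u"
    then show ?thesis
      using ji by (auto simp: mat_dag_def mat_star_def mat_u_def rr_def intro!: word_less_Cons bexI[of _ n])
  next
    assume "v = mat_dag n mat_u"
    then show ?thesis
      using ji by (auto simp: mat_dag_def mat_u_def rr_def intro!: word_less_Cons bexI[of _ n])
  qed
  then obtain k where "k \<in> {1..n}" "\<And>s. s \<in> {1..n} \<Longrightarrow> s \<noteq> k \<Longrightarrow> word_less (?W s) (?W k)"
    "\<forall>x\<in>set (?W k). n \<in> gen_indices x"
    by blast
  moreover from calculation have "tip g = ?W k"
    unfolding g by (intro tip_relation_poly) auto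
  ultimately show ?thesis
    by auto
qed

lemma Rel_memberI:
  assumes "v \<in> Mset n" "j \<in> {1..n}" "i \<in> {1..n}"
  shows "(\<lambda>w. (\<Sum>s\<in>{1..n}. mono [v j (rr n s), mat_dag n v s (rr n i)] w)
           - (if j = i then mono [] w else 0)) \<in> Rel n"
  unfolding Rel_def using assms by (intro CollectI exI[of _ v] exI[of _ j] exI[of _ i]) simp

definition row1_u_ustar :: "nat \<Rightarrow> 'k::field fpoly" where
  "row1_u_ustar n = (\<lambda>w. (\<Sum>s\<in>{1..n}. mono [U 1 s, Us 1 s] w) - mono [] w)"

definition row1_ustar_u :: "nat \<Rightarrow> 'k::field fpoly" where
  "row1_ustar_u n = (\<lambda>w. (\<Sum>s\<in>{1..n}. mono [Us 1 s, U 1 s] w) - mono [] w)"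

lemma row1_u_ustar_in_Rel:
  assumes "n \<ge> 1"
  shows "row1_u_ustar n \<in> Rel n"
proof -
  have reverse: "(\<Sum>s\<in>{1..n}. mono [U 1 s, Us 1 s] w) = (\<Sum>s\<in>{1..n}. mono [U 1 (rr n s), Us 1 (rr n s)] w)"
    for w :: "gen list"
    using sum.atLeastAtMost_rev[of "\<lambda>s. mono [U 1 s, Us 1 s] w" 1 n] by (simp add: rr_def)
  have row: "row1_u_ustar n = (\<lambda>w. (\<Sum>s\<in>{1..n}. mono [mat_u 1 (rr n s), mat_dag n mat_u s (rr n 1)] w)
          - (if (1::nat) = 1 then mono [] w else 0))"
    unfolding row1_u_ustar_def reverse by (simp add: mat_dag_def mat_u_def rr_def)
  show ?thesis
    unfolding row by (rule Rel_memberI) (use assms in \<open>auto simp: Mset_def\<close>)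
qed

lemma row1_ustar_u_in_Rel:
  assumes "n \<ge> 1"
  shows "row1_ustar_u n \<in> Rel n"
proof -
  have row: "row1_ustar_u n = (\<lambda>w. (\<Sum>s\<in>{1..n}. mono [mat_star n mat_u n (rr n s), mat_dag n (mat_star n mat_u) s (rr n n)] w)
          - (if n = n then mono [] w else 0))"
    unfolding row1_ustar_u_def
    by (auto intro!: sum.cong simp: mat_dag_def mat_star_def mat_u_def rr_def)
  show ?thesis
    unfolding row by (rule Rel_memberI) (use assms in \<open>auto simp: Mset_def\<close>)
qed

lemma row1_u_ustar_apply:
  "row1_u_ustar n w = (if w \<in> (\<lambda>s. [U 1 s, Us 1 s]) ` {1..n} then 1 else 0) - (if w = [] then 1 else 0)"
  unfolding row1_u_ustar_def by (simp add: sum_mono_apply_inj_on inj_on_def mono_def[of "[]"])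

lemma row1_ustar_u_apply:
  "row1_ustar_u n w = (if w \<in> (\<lambda>s. [Us 1 s, U 1 s]) ` {1..n} then 1 else 0) - (if w = [] then 1 else 0)"
  unfolding row1_ustar_u_def by (simp add: sum_mono_apply_inj_on inj_on_def mono_def[of "[]"])

text \<open>An ideal is only closed under sums and products, so the subtraction is effected by the factor -u_{1,n}.\<close>
definition obstruction :: "nat \<Rightarrow> 'k::field fpoly" where
  "obstruction n = padd (pmult (mono [U 1 n]) (row1_ustar_u n)) (pmult (row1_u_ustar n) (smono (-1) [U 1 n]))"

lemma obstruction_in_ideal:
  "n \<ge> 1 \<Longrightarrow> obstruction n \<in> ideal_gen (Rel n)"
  unfolding obstruction_def mono_eq_smono
  by (intro ideal_gen.add ideal_gen.lmult ideal_gen.rmult ideal_gen.gen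
      row1_u_ustar_in_Rel row1_ustar_u_in_Rel fin_supp_smono)

lemma obstruction_apply:
  "obstruction n w = (if w \<noteq> [] \<and> hd w = U 1 n then row1_ustar_u n (tl w) else 0)
     - (if w \<noteq> [] \<and> last w = U 1 n then row1_u_ustar n (butlast w) else 0)"
  unfolding obstruction_def padd_def mono_eq_smono pmult_smono_letter_left pmult_smono_letter_right
  by simp

lemma row1_u_ustar_nonzero:
  "row1_u_ustar n w \<noteq> (0::'k::field) \<Longrightarrow> w = [] \<or> (\<exists>s\<in>{1..n}. w = [U 1 s, Us 1 s])"
  by (auto simp: row1_u_ustar_apply split: if_splits)

lemma row1_ustar_u_nonzero:
  "row1_ustar_u n w \<noteq> (0::'k::field) \<Longrightarrow> w = [] \<or> (\<exists>s\<in>{1..n}. w = [Us 1 s, U 1 s])"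
  by (auto simp: row1_ustar_u_apply split: if_splits)

lemma obstruction_support:
  assumes "obstruction n w \<noteq> (0::'k::field)"
  shows "length w < 3 \<or> (\<exists>s\<in>{1..<n}. w = [U 1 n, Us 1 s, U 1 s] \<or> w = [U 1 s, Us 1 s, U 1 n])"
proof -
  have cancel: "obstruction n [U 1 n, Us 1 n, U 1 n] = (0::'k)"
    by (simp add: obstruction_apply row1_u_ustar_apply row1_ustar_u_apply image_iff)
  consider "w \<noteq> []" "hd w = U 1 n" "row1_ustar_u n (tl w) \<noteq> (0::'k)"
    | "w \<noteq> []" "last w = U 1 n" "row1_u_ustar n (butlast w) \<noteq> (0::'k)"
    using assms unfolding obstruction_apply by (cases "row1_ustar_u n (tl w) = (0::'k)") (auto split: if_splits)
  then show ?thesis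
  proof cases
    case 1
    then have "w = [U 1 n] \<or> (\<exists>s\<in>{1..n}. w = [U 1 n, Us 1 s, U 1 s])"
      using row1_ustar_u_nonzero[of n "tl w"] by (cases w) auto
    then show ?thesis
    proof (elim disjE bexE)
      fix s assume s: "s \<in> {1..n}" "w = [U 1 n, Us 1 s, U 1 s]"
      moreover from this have "s \<noteq> n"
        using assms cancel by auto
      ultimately show ?thesis
        by auto
    qed simp
  next
    case 2
    then have "w = [U 1 n] \<or> (\<exists>s\<in>{1..n}. w = [U 1 s, Us 1 s, U 1 n])"
      using row1_u_ustar_nonzero[of n "butlast w"] by (cases w rule: rev_cases) auto
    then show ?thesis
    proof (elim disjE bexE)
      fix s assume s: "s \<in> {1..n}" "w = [U 1 s, Us 1 s, U 1 n]"
      moreover from this have "s \<noteq> n"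
        using assms cancel by auto
      ultimately show ?thesis
        by auto
    qed simp
  qed
qed

lemma obstruction_at_tip:
  "n \<ge> 2 \<Longrightarrow> obstruction n [U 1 n, Us 1 (n - 1), U 1 (n - 1)] = (1::'k::field)"
  by (simp add: obstruction_apply row1_u_ustar_apply row1_ustar_u_apply image_iff)

lemma tip_obstruction:
  assumes "n \<ge> 2"
  shows "tip (obstruction n :: 'k::field fpoly) = [U 1 n, Us 1 (n - 1), U 1 (n - 1)]"
proof (rule tip_eqI)
  show "obstruction n [U 1 n, Us 1 (n - 1), U 1 (n - 1)] \<noteq> (0::'k)"
    using obstruction_at_tip[OF assms, where 'k = 'k] by simp
next
  fix w assume w: "obstruction n w \<noteq> (0::'k)" "w \<noteq> [U 1 n, Us 1 (n - 1), U 1 (n - 1)]"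
  from obstruction_support[OF w(1)]
  show "word_less w [U 1 n, Us 1 (n - 1), U 1 (n - 1)]"
  proof (elim disjE bexE)
    assume "length w < 3"
    then show ?thesis
      by (simp add: word_less_shorter)
  next
    fix s assume "s \<in> {1..<n}" "w = [U 1 n, Us 1 s, U 1 s]"
    moreover from calculation have "s < n - 1"
      using w(2) by auto
    ultimately show ?thesis
      by (simp add: word_less_Cons_same word_less_Cons)
  next
    fix s assume "s \<in> {1..<n}" "w = [U 1 s, Us 1 s, U 1 n]"
    then show ?thesis
      by (simp add: word_less_Cons)
  qed
qed

lemma pair_infix_second_in_tail: "c # d = a @ [x, y] @ b \<Longrightarrow> y \<in> set d"
  by (cases a) auto

theorem mainTheorem15:
  fixes n :: nat
  assumes "n \<ge> 2"
  shows "\<not> is_groebner_basis (Rel n :: 'k::field fpoly set) (ideal_gen (Rel n))"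
proof
  let ?f = "obstruction n :: 'k fpoly"
  assume "is_groebner_basis (Rel n :: 'k::field fpoly set) (ideal_gen (Rel n))"
  then have reduces: "\<And>f :: 'k fpoly. f \<in> ideal_gen (Rel n) \<Longrightarrow> f \<noteq> pzero \<Longrightarrow>
      \<exists>g\<in>Rel n :: 'k fpoly set. g \<noteq> pzero \<and> (\<exists>a b. tip f = a @ tip g @ b)"
    unfolding is_groebner_basis_def by simp
  have "?f \<in> ideal_gen (Rel n)"
    using assms by (intro obstruction_in_ideal) simp
  moreover have "?f \<noteq> pzero"
  proof
    assume "?f = pzero"
    then have "?f [U 1 n, Us 1 (n - 1), U 1 (n - 1)] = 0"
      by (simp add: pzero_def)
    with obstruction_at_tip[OF assms, where 'k = 'k] show False
      by simp
  qed
  ultimately obtain g :: "'k fpoly" and a b where "g \<in> Rel n" "tip ?f = a @ tip g @ b"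
    using reduces by blast
  moreover obtain x y where "tip g = [x, y]" "n \<in> gen_indices y"
    using tip_Rel[OF \<open>g \<in> Rel n\<close>] by blast
  ultimately have "y \<in> set [Us 1 (n - 1), U 1 (n - 1)]"
    using pair_infix_second_in_tail by (metis tip_obstruction[OF assms])
  with \<open>n \<in> gen_indices y\<close> assms show False
    by auto
qed

end
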